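(* Let $\mathcal{X}_1,\mathcal{X}_2$ be non-empty sets, $\mathcal{B}_i\subseteq\mathcal{P}(\mathcal{X}_i)\setminus\{\emptyset\}$, and $\underline{P}_i$ a coherent conditional lower prevision on $\mathcal{C}_i\subseteq\mathcal{C}(\mathcal{X}_i)$ with natural extension $\underline{E}_i$ to $\mathcal{C}(\mathcal{X}_i)$, for $i\in\{1,2\}$. Let $\{i,j\}=\{1,2\}$. Then for any $f_i\in\mathcal{G}(\mathcal{X}_i)$, any non-empty $B_i\subseteq\mathcal{X}_i$ and any $B_j\in\mathcal{B}_j$, $$(\underline{P}_1\otimes\underline{P}_2)(f_i\vert B_i\cap B_j)=(\underline{P}_1\otimes\underline{P}_2)(f_i\vert B_i)=\underline{E}_i(f_i\vert B_i).$$
   Context: Gambles on a non-empty set $\mathcal{X}$ are bounded real functions; $\mathcal{G}(\mathcal{X})$ is the set of gambles, $\mathcal{G}_{>0}(\mathcal{X})$ the non-negative non-zero gambles, $\mathbb{I}_A$ the indicator of $A$. For $\mathcal{A}\subseteq\mathcal{G}(\mathcal{X})$: $\mathrm{posi}(\mathcal{A}):=\{\sum_{i=1}^n\lambda_if_i\colon n\in\mathbb{N},\lambda_i>0,f_i\in\mathcal{A}\}$, $\mathcal{E}(\mathcal{A}):=\mathrm{posi}(\mathcal{A}\cup\mathcal{G}_{>0}(\mathcal{X}))$. A coherent set of desirable gambles $\mathcal{D}\subseteq\mathcal{G}(\mathcal{X})$ satisfies: (D1) $f\geq0,f\neq0\Rightarrow f\in\mathcal{D}$; (D2) $f\in\mathcal{D},\lambda>0\Rightarrow\lambda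 f\in\mathcal{D}$; (D3) $f,g\in\mathcal{D}\Rightarrow f+g\in\mathcal{D}$; (D4) $f\leq0\Rightarrow f\notin\mathcal{D}$. $\mathcal{C}(\mathcal{X}):=\mathcal{G}(\mathcal{X})\times(\mathcal{P}(\mathcal{X})\setminus\{\emptyset\})$; a conditional lower prevision on $\mathcal{C}\subseteq\mathcal{C}(\mathcal{X})$ is a map $(f,B)\mapsto\underline{P}(f\vert B)\in\mathbb{R}\cup\{\pm\infty\}$. For $\mathcal{D}\subseteq\mathcal{G}(\mathcal{X})$, $\underline{P}_{\mathcal{D}}(f\vert B):=\sup\{\mu\in\mathbb{R}\colon[f-\mu]\mathbb{I}_B\in\mathcal{D}\}$. $\underline{P}$ is coherent if $\underline{P}=\underline{P}_{\mathcal{D}}$ on its domain for some coherent set of desirable gambles $\mathcal{D}$. For coherent $\underline{P}$ on $\mathcal{C}$, $\mathcal{E}(\underline{P}):=\mathcal{E}(\{[f-\mu]\mathbb{I}_B\colon(f,B)\in\mathcal{C},\mu<\underline{P}(f\vert B)\})$ and its natural extension is $\underline{E}(f\vert B):=\underline{P}_{\mathcal{E}(\underline{P})}(f\vert B)$, $(f,B)\in\mathcal{C}(\mathcal{X})$. Gambles on $\mathcal{X}_i$ are identified with their cylindrical extensions to $\mathcal{X}_1\times\mathcal{X}_2$, events $B\subseteq\mathcal{X}_1$ with $B\times\mathcal{X}_2$ and $B\subseteq\mathcal{X}_2$ with $\mathcal{X}_1\times B$ (so $B_i\cap B_j$ is a rectangle in $\mathcal{X}_1\times\mathcal{X}_2$).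 For coherent sets of desirable gambles $\mathcal{D}_1,\mathcal{D}_2$: $\mathcal{D}_1\otimes\mathcal{D}_2:=\mathcal{E}(\mathcal{A}_{1\to2}\cup\mathcal{A}_{2\to1})$, $\mathcal{A}_{1\to2}:=\{f_2(X_2)\mathbb{I}_{B_1}(X_1)\colon f_2\in\mathcal{D}_2,B_1\in\mathcal{B}_1\cup\{\mathcal{X}_1\}\}$, $\mathcal{A}_{2\to1}:=\{f_1(X_1)\mathbb{I}_{B_2}(X_2)\colon f_1\in\mathcal{D}_1,B_2\in\mathcal{B}_2\cup\{\mathcal{X}_2\}\}$. Then $(\underline{P}_1\otimes\underline{P}_2)(f\vert B):=\underline{P}_{\mathcal{D}}(f\vert B)$ for $(f,B)\in\mathcal{C}(\mathcal{X}_1\times\mathcal{X}_2)$ with $\mathcal{D}=\mathcal{E}(\underline{P}_1)\otimes\mathcal{E}(\underline{P}_2)$. *)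

theory Defs
  imports Main "HOL-Library.Extended_Real"
begin

definition gamble :: "('a \<Rightarrow> real) \<Rightarrow> bool" where
  "gamble f \<longleftrightarrow> bdd_above (range f) \<and> bdd_below (range f)"

definition gambles :: "('a \<Rightarrow> real) set" where
  "gambles = {f. gamble f}"

definition pos_gambles :: "('a \<Rightarrow> real) set" where
  "pos_gambles = {f. gamble f \<and> (\<forall>x. f x \<ge> 0) \<and> f \<noteq> (\<lambda>x. 0)}"

definition posi :: "('a \<Rightarrow> real) set \<Rightarrow> ('a \<Rightarrow> real) set" where
  "posi A = {g. \<exists>n::nat. n \<ge> 1 \<and> (\<exists>lam f. (\<forall>i<n. lam i > (0::real) \<and> f i \<in> A)
                 \<and> g = (\<lambda>x. \<Sum>i<n. lam i * f i x))}"

definition extend_D :: "('a \<Rightarrow> real) set \<Rightarrow> ('a \<Rightarrow> real) set" where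
  "extend_D A = posi (A \<union> pos_gambles)"

definition coherent_D :: "('a \<Rightarrow> real) set \<Rightarrow> bool" where
  "coherent_D D \<longleftrightarrow> D \<subseteq> gambles
     \<and> (\<forall>f. gamble f \<and> (\<forall>x. f x \<ge> 0) \<and> f \<noteq> (\<lambda>x. 0) \<longrightarrow> f \<in> D)
     \<and> (\<forall>f\<in>D. \<forall>lam::real. lam > 0 \<longrightarrow> (\<lambda>x. lam * f x) \<in> D)
     \<and> (\<forall>f\<in>D. \<forall>g\<in>D. (\<lambda>x. f x + g x) \<in> D)
     \<and> (\<forall>f. (\<forall>x. f x \<le> 0) \<longrightarrow> f \<notin> D)"

text \<open>\<open>\<C>(\<X>)\<close>: gambles paired with non-empty conditioning events.\<close>
definition cond_pairs :: "(('a \<Rightarrow> real) \<times> 'a set) set" where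
  "cond_pairs = {(f, B). gamble f \<and> B \<noteq> {}}"

definition cut :: "('a \<Rightarrow> real) \<Rightarrow> real \<Rightarrow> 'a set \<Rightarrow> 'a \<Rightarrow> real" where
  "cut f \<mu> B = (\<lambda>x. (f x - \<mu>) * (if x \<in> B then 1 else 0))"

definition lp_of :: "('a \<Rightarrow> real) set \<Rightarrow> ('a \<Rightarrow> real) \<Rightarrow> 'a set \<Rightarrow> ereal" where
  "lp_of D f B = Sup (ereal ` {\<mu>. cut f \<mu> B \<in> D})"

text \<open>A conditional lower prevision on domain C is a map
  \<open>P :: gamble \<Rightarrow> event \<Rightarrow> ereal\<close> (only its values on C matter).\<close>
definition coherent_lp :: "(('a \<Rightarrow> real) \<times> 'a set) set \<Rightarrow> (('a \<Rightarrow> real) \<Rightarrow> 'a set \<Rightarrow> ereal) \<Rightarrow> bool" where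
  "coherent_lp C P \<longleftrightarrow> (\<exists>D. coherent_D D \<and> (\<forall>(f, B)\<in>C. P f B = lp_of D f B))"

definition E_of_lp :: "(('a \<Rightarrow> real) \<times> 'a set) set \<Rightarrow> (('a \<Rightarrow> real) \<Rightarrow> 'a set \<Rightarrow> ereal) \<Rightarrow> ('a \<Rightarrow> real) set" where
  "E_of_lp C P = extend_D {cut f \<mu> B | f B \<mu>. (f, B) \<in> C \<and> ereal \<mu> < P f B}"

definition nat_ext :: "(('a \<Rightarrow> real) \<times> 'a set) set \<Rightarrow> (('a \<Rightarrow> real) \<Rightarrow> 'a set \<Rightarrow> ereal) \<Rightarrow> ('a \<Rightarrow> real) \<Rightarrow> 'a set \<Rightarrow> ereal" where
  "nat_ext C P f B = lp_of (E_of_lp C P) f B"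

definition A12 :: "'a set set \<Rightarrow> ('b \<Rightarrow> real) set \<Rightarrow> ('a \<times> 'b \<Rightarrow> real) set" where
  "A12 Bs1 D2 = {(\<lambda>z. f2 (snd z) * (if fst z \<in> B1 then 1 else 0)) | f2 B1. f2 \<in> D2 \<and> B1 \<in> Bs1 \<union> {UNIV}}"

definition A21 :: "'b set set \<Rightarrow> ('a \<Rightarrow> real) set \<Rightarrow> ('a \<times> 'b \<Rightarrow> real) set" where
  "A21 Bs2 D1 = {(\<lambda>z. f1 (fst z) * (if snd z \<in> B2 then 1 else 0)) | f1 B2. f1 \<in> D1 \<and> B2 \<in> Bs2 \<union> {UNIV}}"

definition indep_prod :: "'a set set \<Rightarrow> 'b set set \<Rightarrow> ('a \<Rightarrow> real) set \<Rightarrow> ('b \<Rightarrow> real) set \<Rightarrow> ('a \<times> 'b \<Rightarrow> real) set" where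
  "indep_prod Bs1 Bs2 D1 D2 = extend_D (A12 Bs1 D2 \<union> A21 Bs2 D1)"

definition prod_lp ::
  "'a set set \<Rightarrow> 'b set set \<Rightarrow> (('a \<Rightarrow> real) \<times> 'a set) set \<Rightarrow> (('a \<Rightarrow> real) \<Rightarrow> 'a set \<Rightarrow> ereal)
   \<Rightarrow> (('b \<Rightarrow> real) \<times> 'b set) set \<Rightarrow> (('b \<Rightarrow> real) \<Rightarrow> 'b set \<Rightarrow> ereal)
   \<Rightarrow> ('a \<times> 'b \<Rightarrow> real) \<Rightarrow> ('a \<times> 'b) set \<Rightarrow> ereal" where
  "prod_lp Bs1 Bs2 C1 P1 C2 P2 f B = lp_of (indep_prod Bs1 Bs2 (E_of_lp C1 P1) (E_of_lp C2 P2)) f B"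

end

theory Submission imports Defs begin

text \<open>Coherence of \<open>P\<^sub>i\<close> makes its natural-extension set \<open>E\<^sub>i\<close> coherent, and for
  \<open>[f - \<mu>]\<I>\<^bsub>B\<^sub>1\<^esub> \<in> E\<^sub>1\<close> the gamble \<open>[f - \<mu>]\<I>\<^bsub>B\<^sub>1 \<times> B\<^sub>2\<^esub>\<close> is itself a generator of the
  product, which gives one inequality. Conversely, let \<open>h(x\<^sub>1) \<I>\<^bsub>B\<^sub>2\<^esub>(x\<^sub>2)\<close> be a positive
  combination of generators. Gordan's theorem of the alternative (here via Fourier--Motzkin
  elimination), applied to the coherent set \<open>E\<^sub>2\<close>, yields finitely many weighted points of \<open>\<X>\<^sub>2\<close>
  giving positive mass to \<open>\<I>\<^bsub>B\<^sub>2\<^esub>\<close> and to every gamble of \<open>E\<^sub>2\<close> occurring in the combination.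
  Integrating \<open>x\<^sub>2\<close> out against them turns each generator into a non-negative gamble or a gamble
  of \<open>E\<^sub>1\<close>, so \<open>h \<in> E\<^sub>1\<close> or \<open>h \<ge> 0\<close>; in the second case every smaller \<open>\<mu>\<close> is desirable, which
  suffices for the supremum defining the lower prevision. The second factor follows by swapping
  coordinates.\<close>

lemma gamble_iff_bounded: "gamble f \<longleftrightarrow> (\<exists>M. \<forall>x. \<bar>f x\<bar> \<le> M)"
proof
  assume "gamble f"
  then obtain a b where "\<forall>x. f x \<le> a" "\<forall>x. b \<le> f x"
    unfolding gamble_def bdd_above_def bdd_below_def by auto
  then have "\<forall>x. \<bar>f x\<bar> \<le> max \<bar>a\<bar> \<bar>b\<bar>" by (smt (verit) abs_le_iff)
  then show "\<exists>M. \<forall>x. \<bar>f x\<bar> \<le> M" by blast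
next
  assume "\<exists>M. \<forall>x. \<bar>f x\<bar> \<le> M"
  then obtain M where "\<forall>x. \<bar>f x\<bar> \<le> M" by blast
  then have "\<forall>x. f x \<le> M" "\<forall>x. -M \<le> f x" by (smt (verit))+
  then show "gamble f" unfolding gamble_def bdd_above_def bdd_below_def by auto
qed

lemma gamble_diff: "gamble f \<Longrightarrow> gamble g \<Longrightarrow> gamble (\<lambda>x. f x - g x)"
  unfolding gamble_iff_bounded by (meson abs_triangle_ineq4 add_mono order_trans)

lemma gamble_comp: "gamble f \<Longrightarrow> gamble (f \<circ> \<phi>)"
  unfolding gamble_iff_bounded by auto

lemma gamble_indicator: "gamble (\<lambda>x. if x \<in> B then 1 else (0::real))"
  unfolding gamble_iff_bounded by (intro exI[of _ 1]) auto

lemma gamble_cut: "gamble f \<Longrightarrow> gamble (cut f \<mu> B)"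
proof -
  assume "gamble f"
  then obtain M where M: "\<forall>x. \<bar>f x\<bar> \<le> M" unfolding gamble_iff_bounded by blast
  have "\<bar>cut f \<mu> B x\<bar> \<le> M + \<bar>\<mu>\<bar>" for x
    using M[rule_format, of x] unfolding cut_def by auto
  then show ?thesis unfolding gamble_iff_bounded by blast
qed

lemma cut_antimono: "\<mu>' \<le> \<mu> \<Longrightarrow> cut f \<mu> B x \<le> cut f \<mu>' B x"
  unfolding cut_def by auto

lemma cut_cylinder:
  "cut (\<lambda>z. f (fst z)) \<mu> (B1 \<times> B2) = (\<lambda>z. cut f \<mu> B1 (fst z) * (if snd z \<in> B2 then 1 else 0))"
  unfolding cut_def by (auto simp: fun_eq_iff)

subsection \<open>Coherent sets of desirable gambles\<close>

lemma coherent_D_gamble: "coherent_D D \<Longrightarrow> f \<in> D \<Longrightarrow> gamble f"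
  unfolding coherent_D_def gambles_def by blast

lemma coherent_D_pos: "coherent_D D \<Longrightarrow> gamble f \<Longrightarrow> \<forall>x. 0 \<le> f x \<Longrightarrow> f \<noteq> (\<lambda>x. 0) \<Longrightarrow> f \<in> D"
  unfolding coherent_D_def by blast

lemma coherent_D_add: "coherent_D D \<Longrightarrow> f \<in> D \<Longrightarrow> g \<in> D \<Longrightarrow> (\<lambda>x. f x + g x) \<in> D"
  unfolding coherent_D_def by blast

lemma coherent_D_scale: "coherent_D D \<Longrightarrow> f \<in> D \<Longrightarrow> c > 0 \<Longrightarrow> (\<lambda>x. c * f x) \<in> D"
  unfolding coherent_D_def by blast

lemma coherent_D_ex_pos: "coherent_D D \<Longrightarrow> f \<in> D \<Longrightarrow> \<exists>x. 0 < f x"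
  unfolding coherent_D_def by (meson not_le)

lemma coherent_D_sum:
  assumes "coherent_D D" "finite I" "I \<noteq> {}" "\<forall>i\<in>I. 0 < c i \<and> f i \<in> D"
  shows "(\<lambda>x. \<Sum>i\<in>I. c i * f i x) \<in> D"
  using assms(2-4)
proof (induction I rule: finite_ne_induct)
  case (singleton i)
  then show ?case using coherent_D_scale[OF assms(1)] by simp
next
  case (insert i I)
  then show ?case using coherent_D_add[OF assms(1)] coherent_D_scale[OF assms(1)] by simp
qed

lemma coherent_D_indicator:
  assumes "coherent_D D" "B \<noteq> {}"
  shows "(\<lambda>x. if x \<in> B then 1 else 0) \<in> D"
proof (rule coherent_D_pos[OF assms(1) gamble_indicator])
  show "(\<lambda>x. if x \<in> B then 1 else 0::real) \<noteq> (\<lambda>x. 0)" using assms(2) by (auto simp: fun_eq_iff)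
qed auto

lemma coherent_D_upward:
  assumes D: "coherent_D D" and "g \<in> D" "gamble h" "\<forall>x. g x \<le> h x"
  shows "h \<in> D"
proof (cases "h = g")
  case False
  have "gamble (\<lambda>x. h x - g x)" using assms coherent_D_gamble gamble_diff by blast
  moreover have "(\<lambda>x. h x - g x) \<noteq> (\<lambda>x. 0)" using False by (auto simp: fun_eq_iff)
  ultimately have "(\<lambda>x. h x - g x) \<in> D" using assms by (intro coherent_D_pos) auto
  from coherent_D_add[OF D \<open>g \<in> D\<close> this] show ?thesis by simp
qed (use assms in simp)

lemma coherent_D_sum_cases:
  assumes D: "coherent_D D" and "gamble h" "finite I" "\<forall>i\<in>I. (\<forall>x. 0 \<le> k i x) \<or> k i \<in> D"
    and le: "\<forall>x. (\<Sum>i\<in>I. k i x) \<le> h x"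
  shows "h \<in> D \<or> (\<forall>x. 0 \<le> h x)"
proof -
  define J where "J = {i \<in> I. k i \<in> D}"
  have "(\<Sum>i\<in>J. k i x) \<le> (\<Sum>i\<in>I. k i x)" for x
    unfolding J_def using assms(3,4) by (intro sum_mono2) auto
  then have le': "\<forall>x. (\<Sum>i\<in>J. k i x) \<le> h x" using le order_trans by blast
  show ?thesis
  proof (cases "J = {}")
    case False
    then have "(\<lambda>x. \<Sum>i\<in>J. 1 * k i x) \<in> D"
      using assms(3) unfolding J_def by (intro coherent_D_sum[OF D]) auto
    then show ?thesis using coherent_D_upward[OF D _ assms(2)] le' by simp
  qed (use le' in simp)
qed

lemma coherent_D_cut_below_nonneg:
  assumes D: "coherent_D D" and "gamble f" "B \<noteq> {}" "\<forall>x. 0 \<le> cut f \<mu> B x" "\<mu>' < \<mu>"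
  shows "cut f \<mu>' B \<in> D"
proof (rule coherent_D_pos[OF D gamble_cut[OF assms(2)]])
  show "\<forall>x. 0 \<le> cut f \<mu>' B x"
    using assms(4,5) cut_antimono[of \<mu>' \<mu> f B] by (meson less_imp_le order.trans)
  obtain b where "b \<in> B" using assms(3) by blast
  then have "0 < cut f \<mu>' B b" using assms(4,5) spec[OF assms(4), of b] by (simp add: cut_def)
  then show "cut f \<mu>' B \<noteq> (\<lambda>x. 0)" by force
qed

subsection \<open>Positive hulls\<close>

lemma posiD:
  "g \<in> posi A \<Longrightarrow> \<exists>(n::nat) lam f. n \<ge> 1 \<and> (\<forall>i<n. lam i > (0::real) \<and> f i \<in> A) \<and> g = (\<lambda>x. \<Sum>i<n. lam i * f i x)"
  unfolding posi_def by blast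

lemma posiI:
  "(n::nat) \<ge> 1 \<Longrightarrow> \<forall>i<n. lam i > (0::real) \<and> f i \<in> A \<Longrightarrow> g = (\<lambda>x. \<Sum>i<n. lam i * f i x) \<Longrightarrow> g \<in> posi A"
  unfolding posi_def by blast

lemma posi_base: "a \<in> A \<Longrightarrow> a \<in> posi A"
  by (rule posiI[of 1 "\<lambda>i. 1" "\<lambda>i. a"]) auto

lemma posi_add:
  assumes "a \<in> posi A" "b \<in> posi A"
  shows "(\<lambda>x. a x + b x) \<in> posi A"
proof -
  obtain n :: nat and lam f where n: "n \<ge> 1" "\<forall>i<n. lam i > (0::real) \<and> f i \<in> A"
    "a = (\<lambda>x. \<Sum>i<n. lam i * f i x)" using posiD[OF assms(1)] by blast
  obtain m :: nat and lam' f' where m: "m \<ge> 1" "\<forall>i<m. lam' i > (0::real) \<and> f' i \<in> A"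
    "b = (\<lambda>x. \<Sum>i<m. lam' i * f' i x)" using posiD[OF assms(2)] by blast
  define L where "L i = (if i < n then lam i else lam' (i - n))" for i
  define F where "F i = (if i < n then f i else f' (i - n))" for i
  have "(\<Sum>i<n+k. L i * F i x) = a x + (\<Sum>i<k. lam' i * f' i x)" for k x
    by (induction k) (auto simp: n(3) L_def F_def intro: sum.cong)
  then have "a x + b x = (\<Sum>i<n+m. L i * F i x)" for x
    using m(3) by simp
  then show ?thesis using n m by (intro posiI[of "n+m" L F]) (auto simp: L_def F_def)
qed

lemma posi_scale:
  assumes "a \<in> posi A" "c > 0"
  shows "(\<lambda>x. c * a x) \<in> posi A"
proof -
  obtain n :: nat and lam f where n: "n \<ge> 1" "\<forall>i<n. lam i > (0::real) \<and> f i \<in> A"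
    "a = (\<lambda>x. \<Sum>i<n. lam i * f i x)" using posiD[OF assms(1)] by blast
  show ?thesis
    by (rule posiI[of n "\<lambda>i. c * lam i" f]) (use n assms in \<open>auto simp: sum_distrib_left mult.assoc\<close>)
qed

lemma posi_mono: "A \<subseteq> A' \<Longrightarrow> posi A \<subseteq> posi A'"
  unfolding posi_def by blast

lemma posi_subset_coherent: "coherent_D D \<Longrightarrow> A \<subseteq> D \<Longrightarrow> posi A \<subseteq> D"
  by (auto dest!: posiD intro!: coherent_D_sum simp: lessThan_empty_iff)

lemma posi_comp: "g \<in> posi A \<Longrightarrow> g \<circ> \<phi> \<in> posi ((\<lambda>k. k \<circ> \<phi>) ` A)"
  by (auto dest!: posiD intro!: posiI[where f="\<lambda>i. _ i \<circ> \<phi>"] simp: comp_def)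

lemma coherent_extend_D:
  assumes D: "coherent_D D" and "A \<subseteq> D"
  shows "coherent_D (extend_D A)"
proof -
  have sub: "extend_D A \<subseteq> D"
    unfolding extend_D_def using assms
    by (intro posi_subset_coherent) (auto simp: pos_gambles_def coherent_D_def)
  show ?thesis
    unfolding coherent_D_def
  proof (intro conjI allI impI ballI)
    show "extend_D A \<subseteq> gambles" using sub D unfolding coherent_D_def by blast
    show "\<forall>x. f x \<le> 0 \<Longrightarrow> f \<notin> extend_D A" for f using sub D unfolding coherent_D_def by blast
    show "gamble f \<and> (\<forall>x. 0 \<le> f x) \<and> f \<noteq> (\<lambda>x. 0) \<Longrightarrow> f \<in> extend_D A" for f
      unfolding extend_D_def pos_gambles_def by (auto intro: posi_base)
  qed (auto simp: extend_D_def intro: posi_add posi_scale)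
qed

lemma coherent_E_of_lp:
  assumes "coherent_lp C P" "C \<subseteq> cond_pairs"
  shows "coherent_D (E_of_lp C P)"
proof -
  obtain D where D: "coherent_D D" "\<forall>(f, B)\<in>C. P f B = lp_of D f B"
    using assms(1) unfolding coherent_lp_def by blast
  have cut_in_D: "cut f \<mu> B \<in> D" if fB: "(f, B) \<in> C" "ereal \<mu> < P f B" for f B \<mu>
  proof -
    have "ereal \<mu> < lp_of D f B" using fB D(2) by auto
    then obtain \<mu>' where \<mu>': "cut f \<mu>' B \<in> D" "\<mu> < \<mu>'"
      by (auto simp: lp_of_def less_Sup_iff)
    have "gamble f" using fB assms(2) by (auto simp: cond_pairs_def)
    moreover have "\<forall>x. cut f \<mu>' B x \<le> cut f \<mu> B x" using \<mu>'(2) by (simp add: cut_antimono)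
    ultimately show ?thesis using coherent_D_upward[OF D(1) \<mu>'(1)] gamble_cut by blast
  qed
  show ?thesis
    unfolding E_of_lp_def by (rule coherent_extend_D[OF D(1)]) (auto intro: cut_in_D)
qed

subsection \<open>Gordan's theorem of the alternative\<close>

inductive_set conic :: "(nat \<Rightarrow> real) set \<Rightarrow> (nat \<Rightarrow> real) set" for V where
  zero: "(\<lambda>i. 0) \<in> conic V"
| step: "u \<in> conic V \<Longrightarrow> v \<in> V \<Longrightarrow> 0 \<le> c \<Longrightarrow> (\<lambda>i. u i + c * v i) \<in> conic V"

lemma conic_generator: "v \<in> V \<Longrightarrow> v \<in> conic V"
  using conic.step[OF conic.zero, where v=v and c=1] by simp

lemma conic_add: "w \<in> conic V \<Longrightarrow> u \<in> conic V \<Longrightarrow> (\<lambda>i. u i + w i) \<in> conic V"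
proof (induction w rule: conic.induct)
  case (step w v c)
  show ?case using conic.step[OF step.IH[OF step.prems] step.hyps(2,3)] by (simp add: add.assoc)
qed simp

lemma conic_scale: "u \<in> conic V \<Longrightarrow> 0 \<le> c \<Longrightarrow> (\<lambda>i. c * u i) \<in> conic V"
proof (induction u rule: conic.induct)
  case (step u v d)
  show ?case using conic.step[OF step.IH[OF step.prems] step.hyps(2), of "c * d"] step
    by (simp add: algebra_simps)
qed (simp add: conic.zero)

lemma conic_conic: "u \<in> conic W \<Longrightarrow> W \<subseteq> conic V \<Longrightarrow> u \<in> conic V"
proof (induction u rule: conic.induct)
  case (step u v c)
  have "(\<lambda>i. c * v i) \<in> conic V" using step by (auto intro: conic_scale)
  from conic_add[OF this step.IH[OF step.prems]] show ?case .
qed (rule conic.zero)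

lemma conic_nonneg_coordinate: "u \<in> conic V \<Longrightarrow> \<forall>v\<in>V. 0 \<le> v m \<Longrightarrow> 0 \<le> u m"
  by (induction u rule: conic.induct) auto

lemma conic_range_combination:
  "u \<in> conic (range \<phi>) \<Longrightarrow> \<exists>N c ys. (\<forall>j<N. 0 \<le> c j) \<and> u = (\<lambda>i. \<Sum>j<(N::nat). c j * \<phi> (ys j) i)"
proof (induction u rule: conic.induct)
  case zero
  show ?case by (intro exI[of _ 0]) auto
next
  case (step u v d)
  obtain N :: nat and c ys where N: "\<forall>j<N. 0 \<le> c j" "u = (\<lambda>i. \<Sum>j<N. c j * \<phi> (ys j) i)"
    using step.IH by blast
  obtain y where "v = \<phi> y" using step.hyps(2) by blast
  then show ?case using N step.hyps(3)
    by (intro exI[of _ "Suc N"] exI[of _ "c(N := d)"] exI[of _ "ys(N := y)"])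
      (auto simp: less_Suc_eq intro!: sum.cong)
qed

lemma conic_perturb:
  assumes u: "u \<in> conic V" "\<forall>i<m. 0 < u i" "0 \<le> u m" and v: "v \<in> V" "0 < v m"
  shows "\<exists>u'\<in>conic V. \<forall>i<Suc m. 0 < u' i"
proof -
  define t where "t = 1 + (\<Sum>i<m. \<bar>v i\<bar> / u i)"
  have less: "\<bar>v i\<bar> < t * u i" if "i < m" for i
  proof -
    have "\<bar>v i\<bar> / u i \<le> t - 1"
      unfolding t_def using u(2) that by (auto intro!: member_le_sum)
    moreover have "0 < u i" using u(2) that by blast
    ultimately have "\<bar>v i\<bar> \<le> (t - 1) * u i" by (simp add: pos_divide_le_eq)
    then show ?thesis using \<open>0 < u i\<close> by (simp add: algebra_simps)
  qed
  have "0 \<le> t" unfolding t_def using u(2) by (auto intro!: add_nonneg_nonneg sum_nonneg)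
  then have "(\<lambda>i. t * u i + 1 * v i) \<in> conic V"
    using conic.step[OF conic_scale[OF u(1)] v(1), of t 1] by simp
  then have "(\<lambda>i. t * u i + v i) \<in> conic V" by simp
  moreover have "0 < t * u i + v i" if "i < Suc m" for i
  proof (cases "i < m")
    case True
    then show ?thesis using less[OF True] by linarith
  next
    case False
    then have "i = m" using that by simp
    moreover have "0 \<le> t * u m" using u(3) \<open>0 \<le> t\<close> by simp
    ultimately show ?thesis using v(2) by (simp add: add_nonneg_pos)
  qed
  ultimately show ?thesis by (intro bexI) auto
qed

text \<open>The dual side of Gordan's alternative for \<open>conic V\<close> and the first \<open>m\<close> coordinates.\<close>
definition semipositive_witnessed :: "(nat \<Rightarrow> real) set \<Rightarrow> nat \<Rightarrow> bool" where
  "semipositive_witnessed V m \<longleftrightarrow>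
     (\<forall>lam. (\<forall>i<m. 0 \<le> lam i) \<and> (\<exists>i<m. 0 < lam i) \<longrightarrow> (\<exists>v\<in>V. 0 < (\<Sum>i<m. lam i * v i)))"

lemma semipositive_witnessed_coordinate:
  assumes "semipositive_witnessed V m" "k < m"
  shows "\<exists>v\<in>V. 0 < v k"
proof -
  define lam :: "nat \<Rightarrow> real" where "lam i = (if i = k then 1 else 0)" for i
  have "(\<forall>i<m. 0 \<le> lam i) \<and> (\<exists>i<m. 0 < lam i)" using assms(2) by (auto simp: lam_def)
  then obtain v where "v \<in> V" "0 < (\<Sum>i<m. lam i * v i)"
    using assms(1) unfolding semipositive_witnessed_def by blast
  moreover have "(\<Sum>i<m. lam i * v i) = (\<Sum>i<m. if i = k then v i else 0)"
    by (rule sum.cong) (auto simp: lam_def)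
  ultimately show ?thesis using assms(2) by auto
qed

text \<open>Fourier--Motzkin elimination of coordinate \<open>m\<close>.\<close>
definition fm_eliminate :: "(nat \<Rightarrow> real) set \<Rightarrow> nat \<Rightarrow> (nat \<Rightarrow> real) set" where
  "fm_eliminate V m = {v \<in> V. 0 \<le> v m} \<union>
     {(\<lambda>i. (- w m) * v i + v m * w i) | v w. v \<in> V \<and> 0 < v m \<and> w \<in> V \<and> w m < 0}"

lemma fm_eliminate_subset_conic: "fm_eliminate V m \<subseteq> conic V"
proof
  fix z assume "z \<in> fm_eliminate V m"
  then consider "z \<in> V" | v w where "v \<in> V" "0 < v m" "w \<in> V" "w m < 0"
      "z = (\<lambda>i. (- w m) * v i + v m * w i)"
    unfolding fm_eliminate_def by blast
  then show "z \<in> conic V"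
  proof cases
    case 2
    have "(\<lambda>i. v m * w i) \<in> conic V" "(\<lambda>i. (- w m) * v i) \<in> conic V"
      by (rule conic_scale[OF conic_generator]; use 2 in simp)+
    from conic_add[OF this] show ?thesis using 2(5) by simp
  qed (rule conic_generator)
qed

lemma fm_eliminate_nonneg: "v \<in> fm_eliminate V m \<Longrightarrow> 0 \<le> v m"
  unfolding fm_eliminate_def by (auto simp: algebra_simps)

lemma real_between_nonneg:
  fixes S T :: "real set"
  assumes "T \<noteq> {}" "\<forall>t\<in>T. 0 \<le> t" "\<forall>s\<in>S. \<forall>t\<in>T. s \<le> t"
  shows "\<exists>x\<ge>0. (\<forall>s\<in>S. s \<le> x) \<and> (\<forall>t\<in>T. x \<le> t)"
proof (intro exI[of _ "Inf T"] conjI ballI)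
  have bdd: "bdd_below T" using assms(2) by (auto simp: bdd_below_def)
  show "0 \<le> Inf T" using assms by (intro cInf_greatest) auto
  show "s \<le> Inf T" if "s \<in> S" for s using assms that by (intro cInf_greatest) auto
  show "Inf T \<le> t" if "t \<in> T" for t using that bdd by (rule cInf_lower)
qed

lemma fm_eliminate_pair_bound:
  fixes lam :: "nat \<Rightarrow> real"
  assumes nonpos: "\<forall>u\<in>fm_eliminate V m. (\<Sum>i<m. lam i * u i) \<le> 0"
    and v: "v \<in> V" "0 < v m" and w: "w \<in> V" "w m < 0"
  shows "(\<Sum>i<m. lam i * w i) / (- w m) \<le> - (\<Sum>i<m. lam i * v i) / v m"
proof -
  have "(\<lambda>i. (- w m) * v i + v m * w i) \<in> fm_eliminate V m"
    unfolding fm_eliminate_def using v w by blast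
  from nonpos[rule_format, OF this] have "(\<Sum>i<m. lam i * ((- w m) * v i + v m * w i)) \<le> 0"
    by simp
  moreover have "(\<Sum>i<m. lam i * ((- w m) * v i + v m * w i))
      = (- w m) * (\<Sum>i<m. lam i * v i) + v m * (\<Sum>i<m. lam i * w i)"
    unfolding sum_distrib_left sum.distrib[symmetric] by (intro sum.cong) (auto simp: algebra_simps)
  ultimately show ?thesis using v(2) w(2) by (simp add: field_simps)
qed

lemma fm_eliminate_weight:
  fixes lam :: "nat \<Rightarrow> real"
  assumes nonpos: "\<forall>u\<in>fm_eliminate V m. (\<Sum>i<m. lam i * u i) \<le> 0" and "\<exists>v\<in>V. 0 < v m"
  shows "\<exists>l\<ge>0. \<forall>v\<in>V. (\<Sum>i<m. lam i * v i) + l * v m \<le> 0"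
proof -
  define L where "L u = (\<Sum>i<m. lam i * u i)" for u
  define S where "S = {L w / (- w m) | w. w \<in> V \<and> w m < 0}"
  define T where "T = {- L v / v m | v. v \<in> V \<and> 0 < v m}"
  have "\<forall>t\<in>T. 0 \<le> t"
  proof
    fix t assume "t \<in> T"
    then obtain v where v: "v \<in> V" "0 < v m" "t = - L v / v m" unfolding T_def by blast
    then have "v \<in> fm_eliminate V m" unfolding fm_eliminate_def by simp
    then have "L v \<le> 0" using nonpos unfolding L_def by blast
    then show "0 \<le> t" using v(2,3) by (simp add: divide_nonpos_pos)
  qed
  moreover have "\<forall>s\<in>S. \<forall>t\<in>T. s \<le> t"
    unfolding S_def T_def L_def using fm_eliminate_pair_bound[OF nonpos] by blast
  moreover have "T \<noteq> {}" using assms(2) unfolding T_def by blast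
  ultimately obtain l where l: "0 \<le> l" "\<forall>s\<in>S. s \<le> l" "\<forall>t\<in>T. l \<le> t"
    using real_between_nonneg[of T S] by blast
  have "L v + l * v m \<le> 0" if "v \<in> V" for v
  proof -
    consider "0 < v m" | "v m = 0" | "v m < 0" by linarith
    then show ?thesis
    proof cases
      case 1
      then have "l \<le> - L v / v m" using l(3) that unfolding T_def by blast
      then show ?thesis using 1 by (simp add: field_simps)
    next
      case 2
      then have "v \<in> fm_eliminate V m" using that unfolding fm_eliminate_def by simp
      then show ?thesis using nonpos 2 unfolding L_def by simp
    next
      case 3
      then have "L v / (- v m) \<le> l" using l(2) that unfolding S_def by blast
      then show ?thesis using 3 by (simp add: field_simps)
    qed
  qed
  then show ?thesis using l(1) unfolding L_def by blast
qed

lemma fm_eliminate_semipositive_witnessed: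
  assumes V: "semipositive_witnessed V (Suc m)"
  shows "semipositive_witnessed (fm_eliminate V m) m"
  unfolding semipositive_witnessed_def
proof (intro allI impI)
  fix lam :: "nat \<Rightarrow> real" assume lam: "(\<forall>i<m. 0 \<le> lam i) \<and> (\<exists>i<m. 0 < lam i)"
  show "\<exists>v\<in>fm_eliminate V m. 0 < (\<Sum>i<m. lam i * v i)"
  proof (rule ccontr)
    assume "\<not> ?thesis"
    then have "\<forall>v\<in>fm_eliminate V m. (\<Sum>i<m. lam i * v i) \<le> 0" by (auto simp: not_less)
    with semipositive_witnessed_coordinate[OF V] obtain l where
      l: "0 \<le> l" "\<forall>v\<in>V. (\<Sum>i<m. lam i * v i) + l * v m \<le> 0"
      using fm_eliminate_weight[of V m lam] by blast
    have "(\<forall>i<Suc m. 0 \<le> (lam(m := l)) i) \<and> (\<exists>i<Suc m. 0 < (lam(m := l)) i)"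
      using lam l(1) by (auto simp: less_Suc_eq)
    then obtain v where "v \<in> V" "0 < (\<Sum>i<Suc m. (lam(m := l)) i * v i)"
      using V unfolding semipositive_witnessed_def by blast
    moreover have "(\<Sum>i<Suc m. (lam(m := l)) i * v i) = (\<Sum>i<m. lam i * v i) + l * v m"
      by (auto intro: sum.cong)
    ultimately show False using l(2) by (simp add: not_less[symmetric])
  qed
qed

theorem gordan_alternative: "semipositive_witnessed V m \<Longrightarrow> \<exists>u\<in>conic V. \<forall>i<m. 0 < u i"
proof (induction m arbitrary: V)
  case 0
  then show ?case using conic.zero by blast
next
  case (Suc m)
  obtain v where v: "v \<in> V" "0 < v m"
    using semipositive_witnessed_coordinate[OF Suc.prems] by blast
  obtain u where u: "u \<in> conic (fm_eliminate V m)" "\<forall>i<m. 0 < u i"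
    using Suc.IH[OF fm_eliminate_semipositive_witnessed[OF Suc.prems]] by blast
  have "u \<in> conic V" using conic_conic[OF u(1) fm_eliminate_subset_conic] .
  moreover have "0 \<le> u m" using conic_nonneg_coordinate[OF u(1)] fm_eliminate_nonneg by blast
  ultimately show ?case using conic_perturb[OF _ u(2) _ v] by simp
qed

lemma coherent_D_positive_weights:
  assumes E: "coherent_D E" and "finite F" "F \<subseteq> E"
  shows "\<exists>N c ys. (\<forall>j<(N::nat). 0 \<le> c j) \<and> (\<forall>g\<in>F. 0 < (\<Sum>j<N. c j * g (ys j)))"
proof -
  obtain m G where G: "F = G ` {i. i < (m::nat)}"
    using finite_imp_nat_seg_image_inj_on[OF assms(2)] by blast
  have "semipositive_witnessed (range (\<lambda>x i. G i x)) m"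
    unfolding semipositive_witnessed_def
  proof (intro allI impI)
    fix lam :: "nat \<Rightarrow> real" assume lam: "(\<forall>i<m. 0 \<le> lam i) \<and> (\<exists>i<m. 0 < lam i)"
    define I where "I = {i. i < m \<and> 0 < lam i}"
    have "(\<lambda>x. \<Sum>i\<in>I. lam i * G i x) \<in> E"
      using lam G assms(3) unfolding I_def by (intro coherent_D_sum[OF E]) auto
    then obtain x where "0 < (\<Sum>i\<in>I. lam i * G i x)" using coherent_D_ex_pos[OF E] by blast
    moreover have "(\<Sum>i\<in>I. lam i * G i x) = (\<Sum>i<m. lam i * G i x)"
      using lam unfolding I_def by (intro sum.mono_neutral_left) (auto simp: order.order_iff_strict)
    ultimately show "\<exists>v\<in>range (\<lambda>x i. G i x). 0 < (\<Sum>i<m. lam i * v i)" by auto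
  qed
  then obtain u where "u \<in> conic (range (\<lambda>x i. G i x))" "\<forall>i<m. 0 < u i"
    using gordan_alternative by blast
  then obtain N c ys where "\<forall>j<(N::nat). 0 \<le> c j" "\<forall>i<m. 0 < (\<Sum>j<N. c j * G i (ys j))"
    by (auto dest!: conic_range_combination)
  then show ?thesis using G by blast
qed

subsection \<open>Independent products\<close>

lemma A12_mono: "D \<subseteq> D' \<Longrightarrow> A12 Bs D \<subseteq> A12 Bs D'"
  unfolding A12_def by blast

lemma A12_finite_support:
  assumes "finite K" "K \<subseteq> A12 Bs D"
  shows "\<exists>F. finite F \<and> F \<subseteq> D \<and> K \<subseteq> A12 Bs F"
  using assms
proof (induction K rule: finite_induct)
  case empty
  show ?case by blast
next
  case (insert k K)
  then obtain F where F: "finite F" "F \<subseteq> D" "K \<subseteq> A12 Bs F" by blast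
  obtain f2 B1 where "f2 \<in> D" "B1 \<in> Bs \<union> {UNIV}"
    "k = (\<lambda>z. f2 (snd z) * (if fst z \<in> B1 then 1 else 0))"
    using insert.prems unfolding A12_def by blast
  then have "k \<in> A12 Bs (insert f2 F)" unfolding A12_def by blast
  moreover have "K \<subseteq> A12 Bs (insert f2 F)" using F(3) A12_mono[of F "insert f2 F"] by blast
  ultimately show ?case using F \<open>f2 \<in> D\<close> by (intro exI[of _ "insert f2 F"]) auto
qed

lemma generator_marginal_cases:
  fixes E1 :: "('a \<Rightarrow> real) set" and F :: "('b \<Rightarrow> real) set"
  assumes E1: "coherent_D E1" and c: "\<forall>j<N. 0 \<le> c j" and F: "\<forall>g\<in>F. 0 < (\<Sum>j<N. c j * g (ys j))"
    and k: "k \<in> A12 Bs1 F \<union> A21 Bs2 E1 \<union> pos_gambles"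
  shows "(\<forall>x. 0 \<le> (\<Sum>j<N. c j * k (x, ys j))) \<or> (\<lambda>x. \<Sum>j<N. c j * k (x, ys j)) \<in> E1"
proof -
  consider (A12) g B where "g \<in> F" "k = (\<lambda>z. g (snd z) * (if fst z \<in> B then 1 else 0))"
    | (A21) e B where "e \<in> E1" "k = (\<lambda>z. e (fst z) * (if snd z \<in> B then 1 else 0))"
    | (pos) "\<forall>z. 0 \<le> k z"
    using k unfolding A12_def A21_def pos_gambles_def by blast
  then show ?thesis
  proof cases
    case A12
    then have "(\<Sum>j<N. c j * k (x, ys j)) = (if x \<in> B then 1 else 0) * (\<Sum>j<N. c j * g (ys j))" for x
      unfolding sum_distrib_left by (auto intro!: sum.cong)
    then show ?thesis using F A12(1) by (simp add: less_imp_le)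
  next
    case A21
    define a where "a = (\<Sum>j<N. c j * (if ys j \<in> B then 1 else 0))"
    have marginal: "(\<lambda>x. \<Sum>j<N. c j * k (x, ys j)) = (\<lambda>x. a * e x)"
      unfolding a_def sum_distrib_right A21(2) by (auto intro!: sum.cong)
    have "0 \<le> a" unfolding a_def using c by (intro sum_nonneg) auto
    then consider "a = 0" | "0 < a" by linarith
    then show ?thesis
    proof cases
      case 1
      then show ?thesis using fun_cong[OF marginal] by simp
    next
      case 2
      then show ?thesis unfolding marginal using coherent_D_scale[OF E1 A21(1)] by blast
    qed
  next
    case pos
    then show ?thesis using c by (auto intro!: sum_nonneg)
  qed
qed

lemma sum_weighted_points_cylinder:
  fixes h :: "'a \<Rightarrow> real" and \<beta> :: "'b \<Rightarrow> real"
  assumes "(\<lambda>z. h (fst z) * \<beta> (snd z)) = (\<lambda>z. \<Sum>i<n. lam i * f i z)"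
  shows "h x * (\<Sum>j<N. c j * \<beta> (ys j)) = (\<Sum>i<n. lam i * (\<Sum>j<N. c j * f i (x, ys j)))"
proof -
  have pointwise: "h x * \<beta> y = (\<Sum>i<n. lam i * f i (x, y))" for y
    using fun_cong[OF assms, of "(x, y)"] by simp
  have "h x * (\<Sum>j<N. c j * \<beta> (ys j)) = (\<Sum>j<N. c j * (h x * \<beta> (ys j)))"
    unfolding sum_distrib_left by (simp add: mult.left_commute)
  also have "\<dots> = (\<Sum>i<n. lam i * (\<Sum>j<N. c j * f i (x, ys j)))"
    by (simp add: pointwise sum_distrib_left mult.left_commute sum.swap[of _ "{..<n}"])
  finally show ?thesis .
qed

lemma indep_prod_cylinder_cases:
  fixes E1 :: "('a \<Rightarrow> real) set" and E2 :: "('b \<Rightarrow> real) set"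
  assumes E1: "coherent_D E1" and E2: "coherent_D E2" and "B2 \<noteq> {}" and "gamble h"
    and mem: "(\<lambda>z. h (fst z) * (if snd z \<in> B2 then 1 else 0)) \<in> indep_prod Bs1 Bs2 E1 E2"
  shows "h \<in> E1 \<or> (\<forall>x. 0 \<le> h x)"
proof -
  obtain n :: nat and lam f where
    f: "\<forall>i<n. 0 < lam i \<and> f i \<in> A12 Bs1 E2 \<union> A21 Bs2 E1 \<union> pos_gambles" and
    hf: "(\<lambda>z. h (fst z) * (if snd z \<in> B2 then 1 else 0)) = (\<lambda>z. \<Sum>i<n. lam i * f i z)"
    using posiD[OF mem[unfolded indep_prod_def extend_D_def]] by blast
  obtain F where F: "finite F" "F \<subseteq> E2" "f ` {..<n} \<inter> A12 Bs1 E2 \<subseteq> A12 Bs1 F"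
    using A12_finite_support[of "f ` {..<n} \<inter> A12 Bs1 E2" Bs1 E2] by blast
  define \<beta> :: "'b \<Rightarrow> real" where "\<beta> y = (if y \<in> B2 then 1 else 0)" for y
  have "\<beta> \<in> E2" unfolding \<beta>_def[abs_def] using coherent_D_indicator[OF E2 \<open>B2 \<noteq> {}\<close>] .
  with F obtain N c ys where c: "\<forall>j<(N::nat). 0 \<le> c j"
    and pos: "\<forall>g\<in>insert \<beta> F. 0 < (\<Sum>j<N. c j * g (ys j))"
    using coherent_D_positive_weights[OF E2, of "insert \<beta> F"] by auto
  define M where "M k x = (\<Sum>j<N. c j * k (x, ys j))" for k :: "'a \<times> 'b \<Rightarrow> real" and x
  define m\<beta> where "m\<beta> = (\<Sum>j<N. c j * \<beta> (ys j))"
  have "0 < m\<beta>" using pos unfolding m\<beta>_def by simp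
  have "h x * m\<beta> = (\<Sum>i<n. lam i * M (f i) x)" for x
    unfolding m\<beta>_def M_def using sum_weighted_points_cylinder[OF hf[folded \<beta>_def]] .
  then have "h x = (\<Sum>i<n. lam i / m\<beta> * M (f i) x)" for x
    using \<open>0 < m\<beta>\<close> by (simp add: sum_divide_distrib[symmetric] field_simps)
  moreover have "(\<forall>x. 0 \<le> lam i / m\<beta> * M (f i) x) \<or> (\<lambda>x. lam i / m\<beta> * M (f i) x) \<in> E1"
    if "i < n" for i
  proof -
    have "f i \<in> A12 Bs1 F \<union> A21 Bs2 E1 \<union> pos_gambles" using f F(3) that by blast
    then have "(\<forall>x. 0 \<le> M (f i) x) \<or> M (f i) \<in> E1"
      using generator_marginal_cases[OF E1 c] pos unfolding M_def[abs_def] by blast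
    moreover have "0 < lam i / m\<beta>" using f that \<open>0 < m\<beta>\<close> by simp
    ultimately show ?thesis
      using coherent_D_scale[OF E1, of "M (f i)"] mult_nonneg_nonneg[of "lam i / m\<beta>"] by force
  qed
  ultimately show ?thesis
    using coherent_D_sum_cases[OF E1 \<open>gamble h\<close>, of "{..<n}" "\<lambda>i x. lam i / m\<beta> * M (f i) x"] by simp
qed

subsection \<open>Marginals of the independent product\<close>

lemma Sup_ereal_image_eq:
  fixes A B :: "real set"
  assumes "A \<subseteq> B" and "\<And>x. x \<in> B \<Longrightarrow> x \<notin> A \<Longrightarrow> \<forall>y<x. y \<in> A"
  shows "Sup (ereal ` B) = Sup (ereal ` A)"
proof (rule antisym)
  show "Sup (ereal ` B) \<le> Sup (ereal ` A)"
  proof (rule Sup_least)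
    fix z assume "z \<in> ereal ` B"
    then obtain x where x: "x \<in> B" "z = ereal x" by blast
    show "z \<le> Sup (ereal ` A)"
    proof (cases "x \<in> A")
      case False
      show ?thesis
      proof (rule dense_le)
        fix w assume "w < z"
        then obtain r where "w < ereal r" "r < x" using x(2) ereal_dense2 by fastforce
        then show "w \<le> Sup (ereal ` A)"
          using assms(2)[OF x(1) False] by (meson SUP_upper less_imp_le order.strict_trans2)
      qed
    qed (use x in \<open>simp add: Sup_upper\<close>)
  qed
  show "Sup (ereal ` A) \<le> Sup (ereal ` B)" using assms(1) by (intro Sup_subset_mono image_mono)
qed

lemma lp_of_indep_prod_cylinder:
  fixes E1 :: "('a \<Rightarrow> real) set" and E2 :: "('b \<Rightarrow> real) set"
  assumes E1: "coherent_D E1" and E2: "coherent_D E2" and "gamble f" "B1 \<noteq> {}"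
    and "B2 \<in> Bs2 \<union> {UNIV}" "B2 \<noteq> {}"
  shows "lp_of (indep_prod Bs1 Bs2 E1 E2) (\<lambda>z. f (fst z)) (B1 \<times> B2) = lp_of E1 f B1"
  unfolding lp_of_def
proof (rule Sup_ereal_image_eq)
  show "{\<mu>. cut f \<mu> B1 \<in> E1} \<subseteq> {\<mu>. cut (\<lambda>z. f (fst z)) \<mu> (B1 \<times> B2) \<in> indep_prod Bs1 Bs2 E1 E2}"
    using assms(5) unfolding cut_cylinder indep_prod_def extend_D_def A21_def
    by (auto intro!: posi_base)
  fix \<mu> assume mem: "\<mu> \<in> {\<mu>. cut (\<lambda>z. f (fst z)) \<mu> (B1 \<times> B2) \<in> indep_prod Bs1 Bs2 E1 E2}"
    and "\<mu> \<notin> {\<mu>. cut f \<mu> B1 \<in> E1}"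
  have "cut f \<mu> B1 \<in> E1 \<or> (\<forall>x. 0 \<le> cut f \<mu> B1 x)"
    by (rule indep_prod_cylinder_cases[OF E1 E2 assms(6) gamble_cut[OF assms(3)]])
      (use mem in \<open>simp add: cut_cylinder\<close>)
  then have "\<forall>x. 0 \<le> cut f \<mu> B1 x" using \<open>\<mu> \<notin> _\<close> by simp
  then show "\<forall>\<mu>'<\<mu>. \<mu>' \<in> {\<mu>. cut f \<mu> B1 \<in> E1}"
    using coherent_D_cut_below_nonneg[OF E1 assms(3,4)] by blast
qed

lemma pos_gambles_comp: "surj \<phi> \<Longrightarrow> k \<in> pos_gambles \<Longrightarrow> k \<circ> \<phi> \<in> pos_gambles"
  unfolding pos_gambles_def by (auto simp: gamble_comp fun_eq_iff) (metis surjD)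

lemma A12_comp_swap:
  assumes "k \<in> A12 Bs D"
  shows "k \<circ> prod.swap \<in> A21 Bs D"
proof -
  obtain f2 B1 where "f2 \<in> D" "B1 \<in> Bs \<union> {UNIV}"
    "k = (\<lambda>z. f2 (snd z) * (if fst z \<in> B1 then 1 else 0))" using assms unfolding A12_def by blast
  then show ?thesis
    unfolding A21_def by (intro CollectI exI[of _ f2] exI[of _ B1]) (auto simp: comp_def)
qed

lemma A21_comp_swap:
  assumes "k \<in> A21 Bs D"
  shows "k \<circ> prod.swap \<in> A12 Bs D"
proof -
  obtain f1 B2 where "f1 \<in> D" "B2 \<in> Bs \<union> {UNIV}"
    "k = (\<lambda>z. f1 (fst z) * (if snd z \<in> B2 then 1 else 0))" using assms unfolding A21_def by blast
  then show ?thesis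
    unfolding A12_def by (intro CollectI exI[of _ f1] exI[of _ B2]) (auto simp: comp_def)
qed

lemma indep_prod_swap:
  assumes "g \<in> indep_prod Bs1 Bs2 E1 E2"
  shows "g \<circ> prod.swap \<in> indep_prod Bs2 Bs1 E2 E1"
proof -
  have "(\<lambda>k. k \<circ> prod.swap) ` (A12 Bs1 E2 \<union> A21 Bs2 E1 \<union> pos_gambles)
      \<subseteq> A12 Bs2 E1 \<union> A21 Bs1 E2 \<union> pos_gambles"
    using A12_comp_swap A21_comp_swap pos_gambles_comp[OF surj_swap] by blast
  from posi_mono[OF this] posi_comp[OF assms[unfolded indep_prod_def extend_D_def]]
  show ?thesis unfolding indep_prod_def extend_D_def by blast
qed

lemma lp_of_indep_prod_swap:
  fixes E1 :: "('a \<Rightarrow> real) set" and E2 :: "('b \<Rightarrow> real) set"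
  shows "lp_of (indep_prod Bs1 Bs2 E1 E2) (\<lambda>z. f (snd z)) (A \<times> B)
       = lp_of (indep_prod Bs2 Bs1 E2 E1) (\<lambda>z. f (fst z)) (B \<times> A)"
proof -
  have "cut (\<lambda>z. f (snd z)) \<mu> (A \<times> B) \<circ> prod.swap = cut (\<lambda>z. f (fst z)) \<mu> (B \<times> A)"
    "cut (\<lambda>z. f (fst z)) \<mu> (B \<times> A) \<circ> prod.swap = cut (\<lambda>z. f (snd z)) \<mu> (A \<times> B)" for \<mu>
    unfolding cut_def by (auto simp: fun_eq_iff)
  then have "cut (\<lambda>z. f (snd z)) \<mu> (A \<times> B) \<in> indep_prod Bs1 Bs2 E1 E2
      \<longleftrightarrow> cut (\<lambda>z. f (fst z)) \<mu> (B \<times> A) \<in> indep_prod Bs2 Bs1 E2 E1" for \<mu>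
    by (metis indep_prod_swap)
  then show ?thesis unfolding lp_of_def by simp
qed

theorem proposition43:
  fixes Bs1 :: "'a set set" and Bs2 :: "'b set set"
    and C1 :: "(('a \<Rightarrow> real) \<times> 'a set) set" and P1 :: "('a \<Rightarrow> real) \<Rightarrow> 'a set \<Rightarrow> ereal"
    and C2 :: "(('b \<Rightarrow> real) \<times> 'b set) set" and P2 :: "('b \<Rightarrow> real) \<Rightarrow> 'b set \<Rightarrow> ereal"
  assumes "{} \<notin> Bs1" and "{} \<notin> Bs2"
    and "C1 \<subseteq> cond_pairs" and "C2 \<subseteq> cond_pairs"
    and "coherent_lp C1 P1" and "coherent_lp C2 P2"
  shows "(\<forall>f1 B1 B2. gamble f1 \<and> B1 \<noteq> {} \<and> B2 \<in> Bs2 \<longrightarrow>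
            prod_lp Bs1 Bs2 C1 P1 C2 P2 (\<lambda>z. f1 (fst z)) (B1 \<times> B2)
              = prod_lp Bs1 Bs2 C1 P1 C2 P2 (\<lambda>z. f1 (fst z)) (B1 \<times> UNIV)
          \<and> prod_lp Bs1 Bs2 C1 P1 C2 P2 (\<lambda>z. f1 (fst z)) (B1 \<times> UNIV) = nat_ext C1 P1 f1 B1)
       \<and> (\<forall>f2 B2 B1. gamble f2 \<and> B2 \<noteq> {} \<and> B1 \<in> Bs1 \<longrightarrow>
            prod_lp Bs1 Bs2 C1 P1 C2 P2 (\<lambda>z. f2 (snd z)) (B1 \<times> B2)
              = prod_lp Bs1 Bs2 C1 P1 C2 P2 (\<lambda>z. f2 (snd z)) (UNIV \<times> B2)
          \<and> prod_lp Bs1 Bs2 C1 P1 C2 P2 (\<lambda>z. f2 (snd z)) (UNIV \<times> B2) = nat_ext C2 P2 f2 B2)"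
proof -
  have E1: "coherent_D (E_of_lp C1 P1)" by (rule coherent_E_of_lp[OF assms(5,3)])
  have E2: "coherent_D (E_of_lp C2 P2)" by (rule coherent_E_of_lp[OF assms(6,4)])
  have first: "prod_lp Bs1 Bs2 C1 P1 C2 P2 (\<lambda>z. f1 (fst z)) (B1 \<times> B2) = nat_ext C1 P1 f1 B1"
    if "gamble f1" "B1 \<noteq> {}" "B2 \<in> Bs2 \<union> {UNIV}" for f1 B1 B2
    unfolding prod_lp_def nat_ext_def
    using that assms(2) by (intro lp_of_indep_prod_cylinder[OF E1 E2]) auto
  have second: "prod_lp Bs1 Bs2 C1 P1 C2 P2 (\<lambda>z. f2 (snd z)) (B1 \<times> B2) = nat_ext C2 P2 f2 B2"
    if "gamble f2" "B2 \<noteq> {}" "B1 \<in> Bs1 \<union> {UNIV}" for f2 B1 B2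
    unfolding prod_lp_def nat_ext_def lp_of_indep_prod_swap
    using that assms(1) by (intro lp_of_indep_prod_cylinder[OF E2 E1]) auto
  show ?thesis by (simp add: first second)
qed

end
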